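(* Let $H$ be a Kekul\'ean hexagonal system and $n\ge 0$. For every Clar cover $C$ of $H$ with exactly $n$ hexagons, the graph $f(C)$ is isomorphic to the $n$-cube $Q_n$; hence $f(C)$ is an induced subgraph of $R(H)$ isomorphic to $Q_n$.
   Context: A hexagonal system is a 2-connected finite plane graph in which every interior face is a regular hexagon of side length one; its hexagons are the boundaries of its interior faces; it is Kekul\'ean if it has a perfect matching. A Clar cover of $H$ is a spanning subgraph each of whose components is a hexagon of $H$ or a single edge. The resonance graph $R(H)$ has the perfect matchings of $H$ as vertices, two adjacent iff their symmetric difference is the edge set of a hexagon of $H$. For a Clar cover $C$, $f(C)$ denotes the subgraph of $R(H)$ induced by all perfect matchings $M$ of $H$ such that every hexagon component of $C$ is $M$-alternating (its edges alternately in and not in $M$) and every single-edge component of $C$ belongs to $M$. *)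

theory Defs
  imports Main
begin

text \<open>Hexagonal (honeycomb) lattice, encoded via its dual triangular lattice.
  Cells (unit hexagons of the honeycomb tiling) are indexed by int x int; the six
  neighbouring cells of a cell, in counter-clockwise cyclic order, are given by dirs.
  A vertex of the honeycomb is the set of the 3 cells meeting at it (a triangle of the
  dual lattice); an edge of the honeycomb is the 2-set of its two endpoint vertices.\<close>

type_synonym cell = "int \<times> int"

definition dirs :: "(int \<times> int) list" where
  "dirs = [(1,0),(0,1),(-1,1),(-1,0),(0,-1),(1,-1)]"

definition nb :: "cell \<Rightarrow> nat \<Rightarrow> cell" where
  "nb c i = (fst c + fst (dirs ! (i mod 6)), snd c + snd (dirs ! (i mod 6)))"

definition cell_adj :: "cell \<Rightarrow> cell \<Rightarrow> bool" where
  "cell_adj c d \<longleftrightarrow> (\<exists>i<6. d = nb c i)"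

definition tri :: "cell set \<Rightarrow> bool" where
  "tri T \<longleftrightarrow> (\<exists>c i. T = {c, nb c i, nb c (Suc i)})"

text \<open>The i-th edge of the hexagon of cell c (the edge separating c from nb c i);
  consecutive edges i, i+1 share a vertex, so i = 0..5 runs once around the hexagon.\<close>
definition hex_edge :: "cell \<Rightarrow> nat \<Rightarrow> cell set set" where
  "hex_edge c i = {{c, nb c (i + 5), nb c i}, {c, nb c i, nb c (Suc i)}}"

definition hexE :: "cell \<Rightarrow> cell set set set" where
  "hexE c = range (hex_edge c)"

definition hexV :: "cell \<Rightarrow> cell set set" where
  "hexV c = {T. tri T \<and> c \<in> T}"

definition hV :: "cell set \<Rightarrow> cell set set" where
  "hV S = (\<Union>c\<in>S. hexV c)"

definition hE :: "cell set \<Rightarrow> cell set set set" where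
  "hE S = (\<Union>c\<in>S. hexE c)"

definition graph_connected :: "'v set \<Rightarrow> 'v set set \<Rightarrow> bool" where
  "graph_connected V E \<longleftrightarrow>
     (\<forall>x\<in>V. \<forall>y\<in>V. (x, y) \<in> {(a, b). a \<in> V \<and> b \<in> V \<and> {a, b} \<in> E}\<^sup>*)"

definition two_connected :: "'v set \<Rightarrow> 'v set set \<Rightarrow> bool" where
  "two_connected V E \<longleftrightarrow> finite V \<and> card V \<ge> 3 \<and> graph_connected V E \<and>
     (\<forall>v\<in>V. graph_connected (V - {v}) E)"

text \<open>A hexagonal system: a finite set S of cells whose union graph is 2-connected and
  has no holes (every interior face is a hexagon of S), i.e. the cells not in S form a
  connected set in the cell adjacency graph.\<close>
definition hexagonal_system :: "cell set \<Rightarrow> bool" where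
  "hexagonal_system S \<longleftrightarrow> finite S \<and> two_connected (hV S) (hE S) \<and>
     (\<forall>c d. c \<notin> S \<longrightarrow> d \<notin> S \<longrightarrow>
        (c, d) \<in> {(a, b). a \<notin> S \<and> b \<notin> S \<and> cell_adj a b}\<^sup>*)"

definition perfect_matching :: "'v set \<Rightarrow> 'v set set \<Rightarrow> 'v set set \<Rightarrow> bool" where
  "perfect_matching V E M \<longleftrightarrow> M \<subseteq> E \<and> (\<forall>v\<in>V. \<exists>!e. e \<in> M \<and> v \<in> e)"

definition kekulean :: "cell set \<Rightarrow> bool" where
  "kekulean S \<longleftrightarrow> (\<exists>M. perfect_matching (hV S) (hE S) M)"

definition alternating :: "cell \<Rightarrow> cell set set set \<Rightarrow> bool" where
  "alternating c M \<longleftrightarrow> (\<forall>i. hex_edge c i \<in> M \<longleftrightarrow> hex_edge c (Suc i) \<notin> M)"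

text \<open>A Clar cover, represented by its components: a set Hs of hexagons of S and a set
  Es of edges of the graph, such that every vertex lies in exactly one component.\<close>
definition clar_cover :: "cell set \<Rightarrow> cell set \<Rightarrow> cell set set set \<Rightarrow> bool" where
  "clar_cover S Hs Es \<longleftrightarrow> Hs \<subseteq> S \<and> Es \<subseteq> hE S \<and>
     (\<forall>v\<in>hV S. card {c\<in>Hs. v \<in> hexV c} + card {e\<in>Es. v \<in> e} = 1)"

definition res_adj :: "cell set \<Rightarrow> cell set set set \<Rightarrow> cell set set set \<Rightarrow> bool" where
  "res_adj S M M' \<longleftrightarrow> (\<exists>c\<in>S. (M - M') \<union> (M' - M) = hexE c)"

text \<open>Vertex set of f(C); f(C) itself is the subgraph of R(H) induced by it.\<close>
definition fC :: "cell set \<Rightarrow> cell set \<Rightarrow> cell set set set \<Rightarrow> cell set set set set" where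
  "fC S Hs Es = {M. perfect_matching (hV S) (hE S) M \<and>
                    (\<forall>c\<in>Hs. alternating c M) \<and> Es \<subseteq> M}"

end

theory Submission
  imports Defs
begin

text \<open>A perfect matching
  M in f(C) contains the single-edge components, and at a vertex of a Clar hexagon h its M-edge is
  an edge of h, since h is M-alternating. So M is determined by choosing, independently for each
  Clar hexagon, one of its two alternating edge classes, and every such choice yields a perfect
  matching in f(C). Two of these matchings differ exactly on the union of the hexagons whose
  choices differ, and this union is a single hexagon iff exactly one choice differs: the Clar
  hexagons are vertex-disjoint.\<close>

definition hex_vertex :: "cell \<Rightarrow> nat \<Rightarrow> cell set" where
  "hex_vertex c k = {c, nb c k, nb c (Suc k)}"

lemma nb_mod6: "nb c (k mod 6) = nb c k"
  by (simp add: nb_def)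

lemma nb_cong6: "k mod 6 = k' mod 6 \<Longrightarrow> nb c k = nb c k'"
  by (simp add: nb_def)

lemma hex_vertex_cong6: "k mod 6 = k' mod 6 \<Longrightarrow> hex_vertex c k = hex_vertex c k'"
  unfolding hex_vertex_def by (metis nb_cong6 mod_Suc_eq)

lemma less_6_cases: "(k::nat) < 6 \<Longrightarrow> k = 0 \<or> k = 1 \<or> k = 2 \<or> k = 3 \<or> k = 4 \<or> k = 5"
  by auto

lemma even_mod6: "even (k mod 6) \<longleftrightarrow> even (k::nat)"
  by presburger

lemma hex_vertex_mod6: "hex_vertex c (k mod 6) = hex_vertex c k"
  by (rule hex_vertex_cong6) simp

lemma nb_add_mod6: "nb c (k mod 6 + m) = nb c (k + m)"
  by (rule nb_cong6, rule mod_add_left_eq)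

lemma hex_vertex_add_mod6: "hex_vertex c (k mod 6 + m) = hex_vertex c (k + m)"
  by (rule hex_vertex_cong6, rule mod_add_left_eq)

lemma hex_vertex_rotate: "hex_vertex d k = hex_vertex (nb d k) (k + 2)"
proof -
  have "hex_vertex d (k mod 6) = hex_vertex (nb d (k mod 6)) (k mod 6 + 2)"
    using less_6_cases[of "k mod 6"] by (cases d) (auto simp: hex_vertex_def nb_def dirs_def)
  then show ?thesis
    by (simp only: hex_vertex_add_mod6 hex_vertex_mod6 nb_mod6)
qed

lemma hex_vertex_rotate_Suc: "hex_vertex d k = hex_vertex (nb d (Suc k)) (k + 4)"
proof -
  have "hex_vertex d (k mod 6) = hex_vertex (nb d (k mod 6 + 1)) (k mod 6 + 4)"
    using less_6_cases[of "k mod 6"] by (cases d) (auto simp: hex_vertex_def nb_def dirs_def)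
  then show ?thesis
    by (simp only: hex_vertex_add_mod6 hex_vertex_mod6 nb_add_mod6) simp
qed

lemma hex_vertex_inj6:
  assumes "k < 6" "k' < 6" "hex_vertex c k = hex_vertex c k'"
  shows "k = k'"
proof -
  have "nb c k \<in> hex_vertex c k'" "nb c (Suc k) \<in> hex_vertex c k'"
    using assms(3) by (auto simp: hex_vertex_def)
  then show ?thesis
    using less_6_cases[OF assms(1)] less_6_cases[OF assms(2)]
    by (cases c) (auto simp: hex_vertex_def nb_def dirs_def)
qed

lemma hex_vertex_eq_iff: "hex_vertex c k = hex_vertex c k' \<longleftrightarrow> k mod 6 = k' mod 6"
  using hex_vertex_inj6[of "k mod 6" "k' mod 6" c] hex_vertex_mod6[of c k] hex_vertex_mod6[of c k']
    hex_vertex_cong6[of k k' c]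
  by auto

lemma hexV_eq_range: "hexV c = range (hex_vertex c)"
proof
  show "range (hex_vertex c) \<subseteq> hexV c"
    unfolding hexV_def tri_def hex_vertex_def by blast
  show "hexV c \<subseteq> range (hex_vertex c)"
  proof
    fix T assume "T \<in> hexV c"
    then obtain d k where T: "T = hex_vertex d k" and "c \<in> T"
      by (auto simp: hexV_def tri_def hex_vertex_def)
    then consider "c = d" | "c = nb d k" | "c = nb d (Suc k)"
      by (auto simp: hex_vertex_def)
    then show "T \<in> range (hex_vertex c)"
      using hex_vertex_rotate[of d k] hex_vertex_rotate_Suc[of d k] T by cases auto
  qed
qed

lemma hex_edge_eq_vertices: "hex_edge c k = {hex_vertex c (k + 5), hex_vertex c k}"
proof -
  have "nb c (Suc (k + 5)) = nb c k"
    by (rule nb_cong6) simp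
  then show ?thesis
    by (simp add: hex_edge_def hex_vertex_def)
qed

lemma hex_vertex_in_hex_edge: "hex_vertex c k \<in> hex_edge c k" "hex_vertex c k \<in> hex_edge c (Suc k)"
proof -
  have "(Suc k + 5) mod 6 = k mod 6"
    by simp
  then show "hex_vertex c k \<in> hex_edge c k" "hex_vertex c k \<in> hex_edge c (Suc k)"
    by (simp_all add: hex_edge_eq_vertices hex_vertex_eq_iff)
qed

lemma hex_edge_eq_iff: "hex_edge c k = hex_edge c k' \<longleftrightarrow> k mod 6 = k' mod 6"
proof
  assume "hex_edge c k = hex_edge c k'"
  then have "hex_vertex c k \<in> {hex_vertex c (k' + 5), hex_vertex c k'}"
    "hex_vertex c (k + 5) \<in> {hex_vertex c (k' + 5), hex_vertex c k'}"
    by (auto simp: hex_edge_eq_vertices)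
  then show "k mod 6 = k' mod 6"
    unfolding insert_iff empty_iff hex_vertex_eq_iff
    using less_6_cases[of "k mod 6"] less_6_cases[of "k' mod 6"]
    by (simp add: mod_add_left_eq[of k 6 5, symmetric] mod_add_left_eq[of k' 6 5, symmetric])
      (elim disjE; simp)
next
  assume "k mod 6 = k' mod 6"
  moreover from this have "(k + 5) mod 6 = (k' + 5) mod 6"
    by (metis mod_add_left_eq)
  ultimately show "hex_edge c k = hex_edge c k'"
    using hex_vertex_cong6[of k k' c] hex_vertex_cong6[of "k + 5" "k' + 5" c]
    by (simp add: hex_edge_eq_vertices)
qed

lemma hex_edge_subset_hexV: "hex_edge c k \<subseteq> hexV c"
  by (simp add: hex_edge_eq_vertices hexV_eq_range)

lemma hex_edges_through_vertex:
  assumes "v \<in> hex_edge c k" "v \<in> hex_edge c k'" "even k \<longleftrightarrow> even k'"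
  shows "hex_edge c k = hex_edge c k'"
proof -
  from assms(1) obtain j where j: "v = hex_vertex c j"
    by (auto simp: hex_edge_eq_vertices)
  with assms(1,2) have "j mod 6 = (k + 5) mod 6 \<or> j mod 6 = k mod 6"
    "j mod 6 = (k' + 5) mod 6 \<or> j mod 6 = k' mod 6"
    by (auto simp: hex_edge_eq_vertices hex_vertex_eq_iff)
  moreover have "even (k mod 6) \<longleftrightarrow> even (k' mod 6)"
    using assms(3) by (simp only: even_mod6)
  ultimately have "k mod 6 = k' mod 6"
    using less_6_cases[of "k mod 6"] less_6_cases[of "k' mod 6"]
    by (simp add: mod_add_left_eq[of k 6 5, symmetric] mod_add_left_eq[of k' 6 5, symmetric])
      (elim disjE; simp)
  then show ?thesis
    by (simp add: hex_edge_eq_iff)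
qed

lemma hexE_eq_image: "hexE c = hex_edge c ` {..<6}"
proof -
  have "hex_edge c k \<in> hex_edge c ` {..<6}" for k
    using hex_edge_eq_iff[of c k "k mod 6"] by (intro image_eqI[of _ _ "k mod 6"]) auto
  then show ?thesis
    by (auto simp: hexE_def)
qed

lemma finite_hexE: "finite (hexE c)"
  by (simp add: hexE_eq_image)

lemma card_hexE: "card (hexE c) = 6"
  unfolding hexE_eq_image by (subst card_image) (auto intro: inj_onI simp: hex_edge_eq_iff)

lemma hE_subset_hV: "e \<in> hE S \<Longrightarrow> e \<subseteq> hV S"
  using hex_edge_subset_hexV unfolding hE_def hexE_def hV_def by blast

lemma hE_nonempty: "e \<in> hE S \<Longrightarrow> e \<noteq> {}"
  using hex_vertex_in_hex_edge(1) by (auto simp: hE_def hexE_def)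

lemma perfect_matching_edge_unique:
  assumes "perfect_matching (hV S) (hE S) M" "e \<in> M" "e' \<in> M" "v \<in> e" "v \<in> e'"
  shows "e = e'"
proof -
  have "v \<in> hV S"
    using assms hE_subset_hV by (auto simp: perfect_matching_def)
  with assms show ?thesis
    unfolding perfect_matching_def by blast
qed

lemma alternating_hex_edge_iff:
  assumes "alternating c M"
  shows "hex_edge c k \<in> M \<longleftrightarrow> (even k \<longleftrightarrow> hex_edge c 0 \<in> M)"
proof (induction k)
  case (Suc k)
  have "hex_edge c (Suc k) \<in> M \<longleftrightarrow> hex_edge c k \<notin> M"
    using assms unfolding alternating_def by blast
  with Suc.IH show ?case
    by (simp only: even_Suc) blast
qed simp

lemma alternating_matching_edge_in_hexE:
  assumes "perfect_matching (hV S) (hE S) M" "alternating c M"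
    and "e \<in> M" "v \<in> e" "v \<in> hexV c"
  shows "e \<in> hexE c"
proof -
  obtain j where v: "v = hex_vertex c j"
    using assms(5) by (auto simp: hexV_eq_range)
  have "hex_edge c j \<in> M \<or> hex_edge c (Suc j) \<in> M"
    using assms(2) unfolding alternating_def by blast
  then obtain k where "hex_edge c k \<in> M" "v \<in> hex_edge c k"
    using v hex_vertex_in_hex_edge by blast
  then have "e = hex_edge c k"
    using perfect_matching_edge_unique assms(1,3,4) by blast
  then show ?thesis
    by (simp add: hexE_def)
qed

lemma card_symdiff_image:
  assumes "inj_on h C" "A \<subseteq> C" "B \<subseteq> C"
  shows "card (sym_diff (h ` A) (h ` B)) = card (sym_diff A B)"
proof -
  have "h ` A - h ` B = h ` (A - B)" "h ` B - h ` A = h ` (B - A)"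
    using inj_on_image_set_diff[OF assms(1)] assms(2,3) by auto
  then have "sym_diff (h ` A) (h ` B) = h ` sym_diff A B"
    by (simp add: image_Un)
  moreover have "inj_on h (sym_diff A B)"
    using assms by (auto intro: inj_on_subset)
  ultimately show ?thesis
    by (simp add: card_image)
qed

locale finite_clar_cover =
  fixes S Hs :: "cell set" and Es :: "cell set set set"
  assumes finite_S: "finite S" and clar: "clar_cover S Hs Es"
begin

lemma Hs_subset: "Hs \<subseteq> S" and Es_subset: "Es \<subseteq> hE S"
  using clar by (auto simp: clar_cover_def)

lemma finite_Hs: "finite Hs"
  using Hs_subset finite_S finite_subset by blast

lemma finite_Es: "finite Es"
proof -
  have "finite (hE S)"
    using finite_S finite_hexE by (simp add: hE_def)
  then show ?thesis
    using Es_subset finite_subset by blast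
qed

lemma component_count:
  "v \<in> hV S \<Longrightarrow> card {c\<in>Hs. v \<in> hexV c} + card {e\<in>Es. v \<in> e} = 1"
  using clar by (auto simp: clar_cover_def)

lemma hexagon_at_vertex_unique:
  assumes "c \<in> Hs" "c' \<in> Hs" "v \<in> hexV c" "v \<in> hexV c'"
  shows "c = c'"
proof -
  have "v \<in> hV S"
    using assms Hs_subset by (auto simp: hV_def)
  then have "card {c\<in>Hs. v \<in> hexV c} \<le> Suc 0"
    using component_count by fastforce
  then have "\<forall>x\<in>{c\<in>Hs. v \<in> hexV c}. \<forall>y\<in>{c\<in>Hs. v \<in> hexV c}. x = y"
    using card_le_Suc0_iff_eq[of "{c\<in>Hs. v \<in> hexV c}"] finite_Hs by simp
  then show ?thesis
    using assms by blast
qed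

lemma edge_at_vertex_unique:
  assumes "f \<in> Es" "f' \<in> Es" "v \<in> f" "v \<in> f'"
  shows "f = f'"
proof -
  have "v \<in> hV S"
    using assms Es_subset hE_subset_hV by blast
  then have "card {e\<in>Es. v \<in> e} \<le> Suc 0"
    using component_count by fastforce
  then have "\<forall>x\<in>{e\<in>Es. v \<in> e}. \<forall>y\<in>{e\<in>Es. v \<in> e}. x = y"
    using card_le_Suc0_iff_eq[of "{e\<in>Es. v \<in> e}"] finite_Es by simp
  then show ?thesis
    using assms by blast
qed

lemma hexagon_edge_disjoint:
  assumes "c \<in> Hs" "v \<in> hexV c" "f \<in> Es" "v \<in> f"
  shows False
proof -
  have "v \<in> hV S"
    using assms Hs_subset by (auto simp: hV_def)
  moreover have "{c\<in>Hs. v \<in> hexV c} \<noteq> {}" "{e\<in>Es. v \<in> e} \<noteq> {}"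
    using assms by blast+
  then have "card {c\<in>Hs. v \<in> hexV c} \<noteq> 0" "card {e\<in>Es. v \<in> e} \<noteq> 0"
    using finite_Hs finite_Es by simp_all
  ultimately show False
    using component_count by fastforce
qed

lemma vertex_covered:
  assumes "v \<in> hV S"
  obtains c where "c \<in> Hs" "v \<in> hexV c" | f where "f \<in> Es" "v \<in> f"
proof -
  have "{c\<in>Hs. v \<in> hexV c} \<noteq> {} \<or> {e\<in>Es. v \<in> e} \<noteq> {}"
    using component_count[OF assms] by (metis card.empty add_0 zero_neq_one)
  then show ?thesis
    using that by blast
qed

lemma fC_edge_cases:
  assumes "M \<in> fC S Hs Es" "e \<in> M"
  shows "e \<in> Es \<or> (\<exists>c\<in>Hs. e \<in> hexE c)"
proof -
  have pm: "perfect_matching (hV S) (hE S) M"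
    using assms(1) by (simp add: fC_def)
  then have "e \<in> hE S"
    using assms(2) by (auto simp: perfect_matching_def)
  then obtain v where v: "v \<in> e" "v \<in> hV S"
    using hE_nonempty hE_subset_hV by blast
  show ?thesis
  proof (rule vertex_covered[OF v(2)])
    fix c assume c: "c \<in> Hs" "v \<in> hexV c"
    then have "alternating c M"
      using assms(1) by (simp add: fC_def)
    then show ?thesis
      using alternating_matching_edge_in_hexE[OF pm _ assms(2) v(1) c(2)] c(1) by blast
  next
    fix f assume f: "f \<in> Es" "v \<in> f"
    then have "f \<in> M"
      using assms(1) by (auto simp: fC_def)
    then show ?thesis
      using perfect_matching_edge_unique[OF pm assms(2) _ v(1)] f by blast
  qed
qed

text \<open>Coordinates identifying f(C) with the cube on the vertex set Pow Hs.\<close>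

definition resonance_coord :: "cell set set set \<Rightarrow> cell set" where
  "resonance_coord M = {c \<in> Hs. hex_edge c 0 \<in> M}"

lemma fC_hex_edge_iff:
  "M \<in> fC S Hs Es \<Longrightarrow> c \<in> Hs \<Longrightarrow> hex_edge c k \<in> M \<longleftrightarrow> (even k \<longleftrightarrow> c \<in> resonance_coord M)"
  using alternating_hex_edge_iff[of c M k] by (auto simp: fC_def resonance_coord_def)

lemma fC_diff_in_flipped_hexagon:
  assumes "M \<in> fC S Hs Es" "M' \<in> fC S Hs Es" "e \<in> M" "e \<notin> M'"
  shows "\<exists>c\<in>Hs. e \<in> hexE c \<and> (c \<in> resonance_coord M \<longleftrightarrow> c \<notin> resonance_coord M')"
proof -
  have "e \<notin> Es"
    using assms(2,4) by (auto simp: fC_def)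
  then obtain c k where c: "c \<in> Hs" "e = hex_edge c k"
    using fC_edge_cases[OF assms(1,3)] by (auto simp: hexE_def)
  moreover have "c \<in> resonance_coord M \<longleftrightarrow> c \<notin> resonance_coord M'"
    using fC_hex_edge_iff[OF assms(1) c(1), of k] fC_hex_edge_iff[OF assms(2) c(1), of k]
      assms(3,4) c(2) by blast
  ultimately show ?thesis
    by (auto simp: hexE_def)
qed

lemma fC_symdiff:
  assumes "M \<in> fC S Hs Es" "M' \<in> fC S Hs Es"
  shows "sym_diff M M' =
    (\<Union>c \<in> sym_diff (resonance_coord M) (resonance_coord M'). hexE c)"
proof
  show "sym_diff M M' \<subseteq> (\<Union>c \<in> sym_diff (resonance_coord M) (resonance_coord M'). hexE c)"
    using fC_diff_in_flipped_hexagon[OF assms] fC_diff_in_flipped_hexagon[OF assms(2,1)] by blast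
next
  show "(\<Union>c \<in> sym_diff (resonance_coord M) (resonance_coord M'). hexE c) \<subseteq> sym_diff M M'"
  proof (rule subsetI)
    fix e assume "e \<in> (\<Union>c \<in> sym_diff (resonance_coord M) (resonance_coord M'). hexE c)"
    then obtain c k where c: "c \<in> sym_diff (resonance_coord M) (resonance_coord M')"
      and "e = hex_edge c k"
      by (auto simp: hexE_def)
    moreover have "c \<in> Hs"
      using c by (auto simp: resonance_coord_def)
    ultimately show "e \<in> sym_diff M M'"
      using fC_hex_edge_iff[OF assms(1), of c k] fC_hex_edge_iff[OF assms(2), of c k] c by auto
  qed
qed

definition clar_matching :: "cell set \<Rightarrow> cell set set set" where
  "clar_matching X = Es \<union> {hex_edge c k | c k. c \<in> Hs \<and> (even k \<longleftrightarrow> c \<in> X)}"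

lemma clar_matching_edge_at_hexagon:
  assumes "e \<in> clar_matching X" "v \<in> e" "c \<in> Hs" "v \<in> hexV c"
  obtains k where "e = hex_edge c k" "even k \<longleftrightarrow> c \<in> X"
proof -
  have "e \<notin> Es"
    using hexagon_edge_disjoint assms(2-4) by blast
  then obtain c' k where e: "e = hex_edge c' k" "c' \<in> Hs" "even k \<longleftrightarrow> c' \<in> X"
    using assms(1) by (auto simp: clar_matching_def)
  then have "c' = c"
    using hexagon_at_vertex_unique assms(2-4) hex_edge_subset_hexV by blast
  with e that show ?thesis
    by blast
qed

lemma clar_matching_hex_edge_iff:
  assumes "c \<in> Hs"
  shows "hex_edge c k \<in> clar_matching X \<longleftrightarrow> (even k \<longleftrightarrow> c \<in> X)"
proof
  assume e: "hex_edge c k \<in> clar_matching X"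
  have "hex_vertex c k \<in> hexV c"
    using hex_edge_subset_hexV hex_vertex_in_hex_edge(1) by blast
  then obtain k' where "hex_edge c k = hex_edge c k'" "even k' \<longleftrightarrow> c \<in> X"
    using clar_matching_edge_at_hexagon[OF e hex_vertex_in_hex_edge(1) assms] by blast
  then show "even k \<longleftrightarrow> c \<in> X"
    by (metis hex_edge_eq_iff even_mod6)
qed (use assms in \<open>unfold clar_matching_def, blast\<close>)

lemma clar_matching_edge_at_cover_edge:
  assumes "e \<in> clar_matching X" "v \<in> e" "f \<in> Es" "v \<in> f"
  shows "e = f"
proof (cases "e \<in> Es")
  case False
  then obtain c k where "c \<in> Hs" "e = hex_edge c k"
    using assms(1) by (auto simp: clar_matching_def)
  then show ?thesis
    using hexagon_edge_disjoint assms(2-4) hex_edge_subset_hexV by blast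
qed (use edge_at_vertex_unique assms in blast)

lemma clar_matching_perfect: "perfect_matching (hV S) (hE S) (clar_matching X)"
  unfolding perfect_matching_def
proof (intro conjI ballI)
  show "clar_matching X \<subseteq> hE S"
    using Es_subset Hs_subset by (auto simp: clar_matching_def hE_def hexE_def)
next
  fix v assume "v \<in> hV S"
  then show "\<exists>!e. e \<in> clar_matching X \<and> v \<in> e"
  proof (rule vertex_covered)
    fix c assume c: "c \<in> Hs" "v \<in> hexV c"
    then obtain j where v: "v = hex_vertex c j"
      by (auto simp: hexV_eq_range)
    obtain k where k: "v \<in> hex_edge c k" "even k \<longleftrightarrow> c \<in> X"
      using v hex_vertex_in_hex_edge[of c j] by (cases "even j \<longleftrightarrow> c \<in> X") auto
    show ?thesis
    proof (rule ex1I)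
      show "hex_edge c k \<in> clar_matching X \<and> v \<in> hex_edge c k"
        using clar_matching_hex_edge_iff c(1) k by blast
    next
      fix e assume e: "e \<in> clar_matching X \<and> v \<in> e"
      then obtain k' where "e = hex_edge c k'" "even k' \<longleftrightarrow> c \<in> X"
        using clar_matching_edge_at_hexagon c by blast
      then show "e = hex_edge c k"
        using hex_edges_through_vertex[of v c k' k] e k by simp
    qed
  next
    fix f assume f: "f \<in> Es" "v \<in> f"
    show ?thesis
    proof (rule ex1I)
      show "f \<in> clar_matching X \<and> v \<in> f"
        using f by (simp add: clar_matching_def)
    qed (use clar_matching_edge_at_cover_edge f in blast)
  qed
qed

lemma clar_matching_in_fC: "clar_matching X \<in> fC S Hs Es"
proof -
  have "alternating c (clar_matching X)" if "c \<in> Hs" for c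
    using clar_matching_hex_edge_iff[OF that] by (simp add: alternating_def)
  then show ?thesis
    using clar_matching_perfect by (auto simp: fC_def clar_matching_def)
qed

lemma resonance_coord_clar_matching: "X \<subseteq> Hs \<Longrightarrow> resonance_coord (clar_matching X) = X"
  using clar_matching_hex_edge_iff[of _ 0 X] by (auto simp: resonance_coord_def)

lemma bij_betw_resonance_coord: "bij_betw resonance_coord (fC S Hs Es) (Pow Hs)"
proof (rule bij_betw_imageI)
  show "inj_on resonance_coord (fC S Hs Es)"
  proof (rule inj_onI)
    fix M M' assume "M \<in> fC S Hs Es" "M' \<in> fC S Hs Es" "resonance_coord M = resonance_coord M'"
    then have "sym_diff M M' = {}"
      using fC_symdiff by simp
    then show "M = M'"
      by blast
  qed
  have "X \<in> resonance_coord ` fC S Hs Es" if "X \<subseteq> Hs" for X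
    using resonance_coord_clar_matching[OF that] clar_matching_in_fC by (metis image_eqI)
  then show "resonance_coord ` fC S Hs Es = Pow Hs"
    by (auto simp: resonance_coord_def)
qed

lemma hexE_eq_UN_clar_hexagons:
  assumes "D \<subseteq> Hs" "(\<Union>d\<in>D. hexE d) = hexE c"
  shows "card D = 1"
proof -
  have eq: "hexE d = hexE c" if "d \<in> D" for d
  proof -
    have "hexE d \<subseteq> hexE c"
      using assms(2) that by blast
    then show ?thesis
      using card_subset_eq[OF finite_hexE] card_hexE by metis
  qed
  have "hexE c \<noteq> {}"
    using card_hexE[of c] by (metis card.empty zero_neq_numeral)
  then obtain d where d: "d \<in> D"
    using assms(2) by blast
  have "d' = d" if "d' \<in> D" for d'
  proof -
    have "hex_edge d 0 \<in> hexE d'"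
      using eq[OF d] eq[OF that] by (auto simp: hexE_def)
    then obtain k where "hex_edge d 0 = hex_edge d' k"
      by (auto simp: hexE_def)
    then have "hex_vertex d 0 \<in> hexV d'" "hex_vertex d 0 \<in> hexV d"
      using hex_vertex_in_hex_edge(1)[of d 0] hex_edge_subset_hexV by (metis subsetD)+
    then show ?thesis
      using hexagon_at_vertex_unique assms(1) d that by blast
  qed
  with d have "D = {d}"
    by blast
  then show ?thesis
    by simp
qed

lemma res_adj_iff_resonance_coord:
  assumes "M \<in> fC S Hs Es" "M' \<in> fC S Hs Es"
  shows "res_adj S M M' \<longleftrightarrow> card (sym_diff (resonance_coord M) (resonance_coord M')) = 1"
proof -
  define D where "D = sym_diff (resonance_coord M) (resonance_coord M')"
  have D: "D \<subseteq> Hs"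
    by (auto simp: D_def resonance_coord_def)
  have "res_adj S M M' \<longleftrightarrow> (\<exists>c\<in>S. (\<Union>d\<in>D. hexE d) = hexE c)"
    by (simp only: res_adj_def fC_symdiff[OF assms] D_def)
  also have "\<dots> \<longleftrightarrow> card D = 1"
  proof
    show "card D = 1" if "\<exists>c\<in>S. (\<Union>d\<in>D. hexE d) = hexE c"
      using that hexE_eq_UN_clar_hexagons D by blast
    show "\<exists>c\<in>S. (\<Union>d\<in>D. hexE d) = hexE c" if "card D = 1"
      using that D Hs_subset by (auto simp: card_1_singleton_iff)
  qed
  finally show ?thesis
    by (simp add: D_def)
qed

end

theorem lemma1:
  fixes S Hs :: "cell set" and Es :: "cell set set set" and n :: nat
  assumes "hexagonal_system S" and "kekulean S"
    and "clar_cover S Hs Es" and "card Hs = n"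
  shows "\<exists>\<phi>. bij_betw \<phi> (fC S Hs Es) (Pow {..<n}) \<and>
           (\<forall>M\<in>fC S Hs Es. \<forall>M'\<in>fC S Hs Es.
              res_adj S M M' \<longleftrightarrow> card ((\<phi> M - \<phi> M') \<union> (\<phi> M' - \<phi> M)) = 1)"
proof -
  interpret finite_clar_cover S Hs Es
    using assms(1,3) by unfold_locales (simp add: hexagonal_system_def)
  obtain h where h: "bij_betw h Hs {..<n}"
    using ex_bij_betw_finite_nat[OF finite_Hs] assms(4) by (auto simp: atLeast0LessThan)
  let ?\<phi> = "\<lambda>M. h ` resonance_coord M"
  have "bij_betw ?\<phi> (fC S Hs Es) (Pow {..<n})"
    using bij_betw_trans[OF bij_betw_resonance_coord bij_betw_Pow[OF h]] by (simp add: comp_def)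
  moreover have "card (sym_diff (?\<phi> M) (?\<phi> M')) = card (sym_diff (resonance_coord M) (resonance_coord M'))"
    for M M'
    using card_symdiff_image[OF bij_betw_imp_inj_on[OF h]] by (auto simp: resonance_coord_def)
  ultimately show ?thesis
    using res_adj_iff_resonance_coord by auto
qed

end
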